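(* Let $N_T,K,N_S$ be positive integers, $\mathbf{R}_T\in\mathbb{C}^{N_T\times N_T}$ Hermitian positive semidefinite, $\mathbf{F}\in\mathbb{C}^{N_T\times K}$, $\rho>0$, and $\mathbf{T}(\mathbf{F})=\mathbf{R}_T^{1/2}\mathbf{F}\mathbf{F}^H\mathbf{R}_T^{1/2}$. Let $\delta(\rho)=\delta(\rho;\mathbf{F})$ be the solution of $$\delta(\rho)=\frac{1}{N_S}\mathrm{tr}\,\mathbf{T}(\mathbf{F})\left(\mathbf{I}+\frac{\rho}{1+\rho\delta(\rho)}\mathbf{T}(\mathbf{F})\right)^{-1},$$ and set $\alpha(\rho)=\frac{\rho}{1+\rho\delta(\rho)}$. Then the gradient $\boldsymbol{\Delta}'_\rho=\frac{\partial\delta(\rho)}{\partial\mathbf{F}^*}$ (the matrix whose $(m,n)$ entry is $\partial\delta(\rho)/\partial F^*_{m,n}$) is $$\boldsymbol{\Delta}'_\rho=\frac{\mathbf{R}_T^{1/2}\left(\mathbf{I}+\alpha(\rho)\mathbf{T}(\mathbf{F})\right)^{-2}\mathbf{R}_T^{1/2}\mathbf{F}}{N_S-\alpha^2(\rho)\,\mathrm{tr}\left[\left(\mathbf{T}(\mathbf{F})\left(\mathbf{I}+\alpha(\rho)\mathbf{T}(\mathbf{F})\right)^{-1}\right)^2\right]}.$$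
   Context: Derivatives with respect to $F^*_{m,n}$ are Wirtinger derivatives with respect to the complex conjugate of the $(m,n)$ entry of $\mathbf{F}$, treating $\mathbf{F}$ and $\mathbf{F}^*$ as independent. $\mathbf{R}_T^{1/2}$ is the Hermitian positive semidefinite square root and $(\cdot)^H$ the conjugate transpose. *)

theory Defs
  imports "HOL-Analysis.Analysis"
begin

text \<open>Complex matrices are rendered as complex^'c^'r (r rows, c columns);
  dimensions N_T, K are finite index types (hence positive).\<close>

definition cadj :: "complex^'c^'r \<Rightarrow> complex^'r^'c" where
  "cadj A = (\<chi> i j. cnj (A $ j $ i))"

definition hermitian :: "complex^'n^'n \<Rightarrow> bool" where
  "hermitian A \<longleftrightarrow> cadj A = A"

definition psd :: "complex^'n^'n \<Rightarrow> bool" where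
  "psd A \<longleftrightarrow> hermitian A \<and>
     (\<forall>x :: complex^'n. (\<Sum>i\<in>UNIV. cnj (x $ i) * (A *v x) $ i) \<in> \<real> \<and>
                        0 \<le> Re (\<Sum>i\<in>UNIV. cnj (x $ i) * (A *v x) $ i))"

text \<open>T(F) = R_T^{1/2} F F^H R_T^{1/2}, where S is the Hermitian PSD square root of R_T.\<close>
definition Tmat :: "complex^'n^'n \<Rightarrow> complex^'k^'n \<Rightarrow> complex^'n^'n" where
  "Tmat S F = S ** F ** cadj F ** S"

definition delta :: "nat \<Rightarrow> complex^'n^'n \<Rightarrow> real \<Rightarrow> complex^'k^'n \<Rightarrow> real" where
  "delta NS S \<rho> F = (THE d. 0 \<le> d \<and>
      complex_of_real d = trace (Tmat S F ** matrix_inv (mat 1 + mat (complex_of_real (\<rho> / (1 + \<rho> * d))) ** Tmat S F))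
                           / of_nat NS)"

definition munit :: "'r \<Rightarrow> 'c \<Rightarrow> complex \<Rightarrow> complex^'c^'r" where
  "munit m n c = (\<chi> i j. if i = m \<and> j = n then c else 0)"

definition has_wirtinger_conj_deriv ::
  "(complex^'c^'r \<Rightarrow> real) \<Rightarrow> complex^'c^'r \<Rightarrow> 'r \<Rightarrow> 'c \<Rightarrow> complex \<Rightarrow> bool" where
  "has_wirtinger_conj_deriv g F m n w \<longleftrightarrow>
     (\<exists>dx dy. ((\<lambda>t. g (F + munit m n (complex_of_real t))) has_real_derivative dx) (at 0) \<and>
              ((\<lambda>t. g (F + munit m n (\<i> * complex_of_real t))) has_real_derivative dy) (at 0) \<and>
              w = (complex_of_real dx + \<i> * complex_of_real dy) / 2)"

end

theory Submission
  imports Defs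
begin

text \<open>
  Write T = T(F), Q(a) = (I + a T)^-1, n = N_T and N = N_S. With \<alpha> = \<rho> / (1 + \<rho> \<delta>) the
  fixed-point equation becomes \<psi>(\<alpha>) = 0 for the continuous function
  \<psi>(a) = N (1 - a / \<rho>) - n + Re tr Q(a), which is strictly decreasing because tr Q(a) is
  (T is a Gram matrix). Hence \<delta> is well defined and \<alpha> depends continuously on F.
  Subtracting the fixed-point equations at F and F + t E and expanding Q(F + t E) - Q(F) by the
  resolvent identity gives (\<delta>(F + t E) - \<delta>(F)) B_t = t R_t, where B_t tends to
  N - \<alpha>^2 tr((T Q)^2), which is positive because \<psi>(\<alpha>) = 0, and R_t tends to
  tr(Q^2 (S F E^H S + S E F^H S)) = 2 Re tr(E^H S Q^2 S F). So \<delta> has the directional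
  derivative 2 Re tr(E^H \<Delta>') in every direction E, and the Wirtinger derivative is read off
  from the directions E_mn and \<i> E_mn.
\<close>

section \<open>Complex matrices\<close>

lemma cadj_nth [simp]: "cadj A $ i $ j = cnj (A $ j $ i)"
  by (simp add: cadj_def)

lemma cadj_cadj [simp]: "cadj (cadj A) = A"
  by (simp add: vec_eq_iff)

lemma cadj_mult: "cadj (A ** B) = cadj B ** cadj A"
  by (simp add: vec_eq_iff matrix_matrix_mult_def mult.commute)

lemma cadj_add: "cadj (A + B) = cadj A + cadj B"
  by (simp add: vec_eq_iff)

lemma cadj_scaleR: "cadj (r *\<^sub>R A) = r *\<^sub>R cadj A"
  by (simp add: vec_eq_iff)

lemma cadj_mat: "cadj (mat c :: complex^'n^'n) = mat (cnj c)"
  by (simp add: vec_eq_iff mat_def)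

lemma trace_cadj: "trace (cadj A) = cnj (trace A)"
  by (simp add: trace_def)

lemma matrix_add_rdistrib: "((A::'a::semiring_1^'n^'m) + B) ** C = A ** C + B ** C"
  by (simp add: vec_eq_iff matrix_matrix_mult_def sum.distrib distrib_right)

lemma matrix_diff_ldistrib: "(A::'a::ring_1^'n^'m) ** (B - C) = A ** B - A ** C"
  by (simp add: vec_eq_iff matrix_matrix_mult_def sum_subtractf right_diff_distrib)

lemma matrix_diff_rdistrib: "((A::'a::ring_1^'n^'m) - B) ** C = A ** C - B ** C"
  by (simp add: vec_eq_iff matrix_matrix_mult_def sum_subtractf left_diff_distrib)

lemma matrix_scaleR_left: "(r *\<^sub>R (A::'a::real_algebra_1^'n^'m)) ** B = r *\<^sub>R (A ** B)"
  by (simp add: scalar_matrix_assoc)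

lemma matrix_scaleR_right: "(A::'a::real_algebra_1^'n^'m) ** (r *\<^sub>R B) = r *\<^sub>R (A ** B)"
  by (simp add: matrix_scalar_ac scalar_matrix_assoc)

lemma mat_of_real_mult: "mat (of_real r) ** (A::'a::real_algebra_1^'m^'n) = r *\<^sub>R A"
  by (simp add: vec_eq_iff matrix_matrix_mult_def mat_def if_distrib if_distribR
      cong: if_cong) (simp add: scaleR_conv_of_real)

lemma matrix_vector_mult_scaleR: "(r *\<^sub>R (A::'a::real_algebra_1^'n^'m)) *v x = r *\<^sub>R (A *v x)"
  by (simp add: vec_eq_iff matrix_vector_mult_def scaleR_sum_right)

lemma trace_scaleR: "trace (r *\<^sub>R (A::complex^'n^'n)) = of_real r * trace A"
  by (simp add: trace_def sum_distrib_left scaleR_conv_of_real[where 'a=complex])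

lemma hermitian_trace_real: "hermitian A \<Longrightarrow> trace A \<in> \<real>"
  by (metis hermitian_def trace_cadj Reals_cnj_iff)

lemma nonneg_Reals_sum: "(\<And>i. i \<in> A \<Longrightarrow> f i \<in> \<real>\<^sub>\<ge>\<^sub>0) \<Longrightarrow> sum f A \<in> (\<real>\<^sub>\<ge>\<^sub>0 :: complex set)"
  by (simp add: complex_nonneg_Reals_iff Re_sum Im_sum sum_nonneg)

lemma cnj_nonneg_Reals: "z \<in> \<real>\<^sub>\<ge>\<^sub>0 \<Longrightarrow> cnj z = z"
  by (simp add: complex_nonneg_Reals_iff complex_eq_iff)

definition cinner :: "complex^'n \<Rightarrow> complex^'n \<Rightarrow> complex" where
  "cinner x y = (\<Sum>i\<in>UNIV. cnj (x $ i) * y $ i)"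

lemma cinner_adjoint: "cinner x (A *v y) = cinner (cadj A *v x) y"
proof -
  have "cinner x (A *v y) = (\<Sum>i\<in>UNIV. \<Sum>j\<in>UNIV. cnj (x $ i) * A $ i $ j * y $ j)"
    by (simp add: cinner_def matrix_vector_mult_def sum_distrib_left mult.assoc)
  also have "\<dots> = (\<Sum>j\<in>UNIV. \<Sum>i\<in>UNIV. cnj (x $ i) * A $ i $ j * y $ j)"
    by (rule sum.swap)
  also have "\<dots> = cinner (cadj A *v x) y"
    by (simp add: cinner_def matrix_vector_mult_def sum_distrib_left sum_distrib_right mult_ac)
  finally show ?thesis .
qed

lemma cinner_commute: "cinner y x = cnj (cinner x y)"
  by (simp add: cinner_def mult.commute)

lemma cinner_add_left: "cinner (x + y) z = cinner x z + cinner y z"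
  by (simp add: cinner_def distrib_right sum.distrib)

lemma cinner_add_right: "cinner x (y + z) = cinner x y + cinner x z"
  by (simp add: cinner_def distrib_left sum.distrib)

lemma cinner_scaleR_left: "cinner (r *\<^sub>R x) y = r *\<^sub>R cinner x y"
  by (simp add: cinner_def scaleR_sum_right)

lemma cinner_scaleR_right: "cinner x (r *\<^sub>R y) = r *\<^sub>R cinner x y"
  by (simp add: cinner_def scaleR_sum_right)

lemma cinner_self: "cinner x x = of_real ((norm x)\<^sup>2)"
proof -
  have "cnj z * z = of_real ((cmod z)\<^sup>2)" for z :: complex
    by (metis complex_norm_square mult.commute)
  then show ?thesis
    by (simp add: cinner_def norm_vec_def L2_set_def sum_nonneg)
qed

lemma diag_cadj_mult_mult: "(cadj B ** W ** B) $ k $ k = cinner (column k B) (W *v column k B)"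
proof -
  have "(cadj B ** W ** B) $ k $ k = (\<Sum>j\<in>UNIV. \<Sum>i\<in>UNIV. cnj (B $ i $ k) * W $ i $ j * B $ j $ k)"
    by (simp add: matrix_matrix_mult_def sum_distrib_right)
  also have "\<dots> = (\<Sum>i\<in>UNIV. \<Sum>j\<in>UNIV. cnj (B $ i $ k) * W $ i $ j * B $ j $ k)"
    by (rule sum.swap)
  also have "\<dots> = cinner (column k B) (W *v column k B)"
    by (simp add: cinner_def column_def matrix_vector_mult_def sum_distrib_left mult.assoc)
  finally show ?thesis .
qed

lemma psd_iff: "psd A \<longleftrightarrow> hermitian A \<and> (\<forall>x. cinner x (A *v x) \<in> \<real>\<^sub>\<ge>\<^sub>0)"
  by (auto simp: psd_def cinner_def complex_nonneg_Reals_iff complex_is_Real_iff)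

lemma psd_gram: "psd (B ** cadj B)"
proof -
  have "cinner x ((B ** cadj B) *v x) = of_real ((norm (cadj B *v x))\<^sup>2)" for x
    by (simp add: cinner_adjoint cinner_self cadj_mult flip: matrix_vector_mul_assoc)
  then show ?thesis
    by (simp add: psd_iff hermitian_def cadj_mult)
qed

lemma Tmat_gram: "hermitian S \<Longrightarrow> Tmat S G = (S ** G) ** cadj (S ** G)"
  by (simp add: hermitian_def Tmat_def cadj_mult matrix_mul_assoc)

lemma psd_Tmat: "hermitian S \<Longrightarrow> psd (Tmat S G)"
  by (simp add: Tmat_gram psd_gram)

lemma tendsto_matrix_mult [tendsto_intros]:
  fixes f :: "'x \<Rightarrow> 'a::real_normed_field^'n^'m"
  assumes "(f \<longlongrightarrow> A) F" "(g \<longlongrightarrow> B) F"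
  shows "((\<lambda>x. f x ** g x) \<longlongrightarrow> A ** B) F"
  unfolding matrix_matrix_mult_def by (intro tendsto_intros assms)

lemma tendsto_trace [tendsto_intros]:
  fixes f :: "'x \<Rightarrow> 'a::real_normed_field^'n^'n"
  assumes "(f \<longlongrightarrow> A) F"
  shows "((\<lambda>x. trace (f x)) \<longlongrightarrow> trace A) F"
  unfolding trace_def by (intro tendsto_intros assms)

lemma tendsto_cadj [tendsto_intros]:
  "(f \<longlongrightarrow> A) F \<Longrightarrow> ((\<lambda>x. cadj (f x)) \<longlongrightarrow> cadj A) F"
  unfolding cadj_def by (intro tendsto_intros)

lemma tendsto_Tmat [tendsto_intros]:
  "(f \<longlongrightarrow> G) F \<Longrightarrow> ((\<lambda>x. Tmat S (f x)) \<longlongrightarrow> Tmat S G) F"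
  unfolding Tmat_def by (intro tendsto_intros)

lemma continuous_on_trace [continuous_intros]:
  fixes f :: "'x::topological_space \<Rightarrow> 'a::real_normed_field^'n^'n"
  shows "continuous_on s f \<Longrightarrow> continuous_on s (\<lambda>x. trace (f x))"
  unfolding trace_def by (intro continuous_intros)

lemma matrix_inv_injective:
  fixes A :: "'a::field^'n^'n"
  assumes "\<And>x. A *v x = 0 \<Longrightarrow> x = 0"
  shows "matrix_inv A ** A = mat 1" "A ** matrix_inv A = mat 1"
proof -
  have "invertible A"
    using assms by (simp add: invertible_left_inverse matrix_left_invertible_ker)
  then have "A ** matrix_inv A = mat 1 \<and> matrix_inv A ** A = mat 1"
    unfolding invertible_def matrix_inv_def by (rule someI_ex)
  then show "matrix_inv A ** A = mat 1" "A ** matrix_inv A = mat 1" by auto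
qed

section \<open>Resolvents of positive semidefinite matrices\<close>

definition resolvent :: "complex^'n^'n \<Rightarrow> real \<Rightarrow> complex^'n^'n" where
  "resolvent T a = matrix_inv (mat 1 + a *\<^sub>R T)"

lemma power2_norm_le_cinner_shift:
  assumes "psd T" "0 \<le> a"
  shows "(norm x)\<^sup>2 \<le> Re (cinner x ((mat 1 + a *\<^sub>R T) *v x))"
proof -
  have "Re (cinner x (T *v x)) \<ge> 0"
    using assms(1) by (simp add: psd_iff complex_nonneg_Reals_iff)
  then show ?thesis
    using assms(2)
    by (simp add: matrix_vector_mult_add_rdistrib matrix_vector_mult_scaleR cinner_add_right
        cinner_scaleR_right cinner_self)
qed

lemma resolvent_inverse:
  assumes "psd T" "0 \<le> a"
  shows "resolvent T a ** (mat 1 + a *\<^sub>R T) = mat 1"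
    and "(mat 1 + a *\<^sub>R T) ** resolvent T a = mat 1"
proof -
  have "x = 0" if "(mat 1 + a *\<^sub>R T) *v x = 0" for x
    using power2_norm_le_cinner_shift[OF assms, of x] that by (simp add: cinner_def)
  then show "resolvent T a ** (mat 1 + a *\<^sub>R T) = mat 1"
    and "(mat 1 + a *\<^sub>R T) ** resolvent T a = mat 1"
    unfolding resolvent_def by (blast intro: matrix_inv_injective)+
qed

lemma resolvent_zero: "psd T \<Longrightarrow> resolvent T 0 = mat 1"
  using resolvent_inverse(1)[of T 0] by simp

lemma scaleR_resolvent_mult:
  assumes "psd T" "0 \<le> a"
  shows "a *\<^sub>R (resolvent T a ** T) = mat 1 - resolvent T a"
  using resolvent_inverse(1)[OF assms]
  by (simp add: matrix_add_ldistrib matrix_scaleR_right algebra_simps)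

lemma scaleR_mult_resolvent:
  assumes "psd T" "0 \<le> a"
  shows "a *\<^sub>R (T ** resolvent T a) = mat 1 - resolvent T a"
  using resolvent_inverse(2)[OF assms]
  by (simp add: matrix_add_rdistrib matrix_scaleR_left algebra_simps)

lemma matrix_inv_shift_eq_resolvent: "matrix_inv (mat 1 + mat (complex_of_real a) ** T) = resolvent T a"
  by (simp add: resolvent_def mat_of_real_mult)

lemma hermitian_resolvent:
  assumes "psd T" "0 \<le> a"
  shows "hermitian (resolvent T a)"
proof -
  let ?A = "mat 1 + a *\<^sub>R T" and ?R = "resolvent T a"
  have "cadj ?A = ?A"
    using assms(1) by (simp add: psd_iff hermitian_def cadj_add cadj_scaleR cadj_mat)
  then have "cadj ?R ** ?A = mat 1"
    using arg_cong[OF resolvent_inverse(2)[OF assms], of cadj] by (simp add: cadj_mult cadj_mat)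
  then have "cadj ?R = cadj ?R ** (?A ** ?R)"
    using resolvent_inverse(2)[OF assms] by simp
  also have "\<dots> = ?R"
    using \<open>cadj ?R ** ?A = mat 1\<close> by (simp add: matrix_mul_assoc)
  finally show ?thesis by (simp add: hermitian_def)
qed

lemma resolvent_diff:
  assumes "psd T" "psd T'" "0 \<le> a" "0 \<le> b"
  shows "resolvent T a - resolvent T' b
           = resolvent T a ** (b *\<^sub>R T' - a *\<^sub>R T) ** resolvent T' b"
proof -
  have "resolvent T a ** (b *\<^sub>R T' - a *\<^sub>R T) ** resolvent T' b
      = resolvent T a ** ((mat 1 + b *\<^sub>R T') ** resolvent T' b)
        - (resolvent T a ** (mat 1 + a *\<^sub>R T)) ** resolvent T' b"
    by (simp add: matrix_diff_ldistrib matrix_diff_rdistrib matrix_add_ldistrib matrix_add_rdistrib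
        matrix_mul_assoc)
  then show ?thesis
    using resolvent_inverse(1)[OF assms(1,3)] resolvent_inverse(2)[OF assms(2,4)] by simp
qed

lemma trace_mult_resolvent:
  fixes T :: "complex^'n^'n"
  assumes "psd T" "0 < a"
  shows "trace (T ** resolvent T a) = of_real ((real CARD('n) - Re (trace (resolvent T a))) / a)"
proof -
  have "of_real a * trace (T ** resolvent T a) = of_nat CARD('n) - trace (resolvent T a)"
    using arg_cong[OF scaleR_mult_resolvent[OF assms(1) less_imp_le[OF assms(2)]], of trace]
    by (simp add: trace_scaleR trace_sub trace_I)
  moreover have "trace (resolvent T a) = of_real (Re (trace (resolvent T a)))"
    using hermitian_trace_real[OF hermitian_resolvent[OF assms(1)]] assms(2) by simp
  ultimately show ?thesis
    using assms(2) by (simp add: field_simps)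
qed

lemma trace_resolvent_sq:
  assumes "psd T" "0 \<le> a"
  defines "Q \<equiv> resolvent T a"
  shows "trace (X ** Q) - of_real a * trace (T ** Q ** X ** Q) = trace (Q ** Q ** X)"
proof -
  have QT: "a *\<^sub>R (Q ** T) = mat 1 - Q"
    unfolding Q_def by (rule scaleR_resolvent_mult[OF assms(1,2)])
  have "of_real a * trace (T ** Q ** X ** Q) = of_real a * trace (Q ** T ** Q ** X)"
    using trace_mul_sym[of Q "T ** Q ** X"] by (simp add: matrix_mul_assoc)
  also have "\<dots> = trace ((a *\<^sub>R (Q ** T)) ** Q ** X)"
    by (simp add: matrix_scaleR_left trace_scaleR)
  also have "\<dots> = trace (Q ** X) - trace (Q ** Q ** X)"
    unfolding QT by (simp add: matrix_diff_rdistrib trace_sub)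
  finally have "of_real a * trace (T ** Q ** X ** Q) = trace (Q ** X) - trace (Q ** Q ** X)" .
  then show ?thesis
    using trace_mul_sym[of X Q] by simp
qed

lemma norm_resolvent_entry_le:
  assumes "psd T" "0 \<le> a"
  shows "cmod (resolvent T a $ i $ j) \<le> 1"
proof -
  define y where "y = resolvent T a *v axis j 1"
  have "(mat 1 + a *\<^sub>R T) *v y = axis j 1"
    using resolvent_inverse(2)[OF assms] by (simp add: y_def matrix_vector_mul_assoc)
  then have "(norm y)\<^sup>2 \<le> Re (cnj (y $ j))"
    using power2_norm_le_cinner_shift[OF assms, of y]
    by (simp add: cinner_def axis_def if_distrib if_distribR cong: if_cong)
  also have "\<dots> \<le> norm y"
    using complex_Re_le_cmod[of "cnj (y $ j)"] Finite_Cartesian_Product.norm_nth_le[of y j] by simp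
  finally have "norm y * norm y \<le> norm y * 1"
    by (simp add: power2_eq_square)
  then have "norm y \<le> 1"
    by (cases "norm y = 0") (simp_all add: mult_le_cancel_left_pos)
  moreover have "y $ i = resolvent T a $ i $ j"
    by (simp add: y_def matrix_vector_mult_def axis_def if_distrib if_distribR cong: if_cong)
  ultimately show ?thesis
    using Finite_Cartesian_Product.norm_nth_le[of y i] by simp
qed

lemma tendsto_resolvent:
  assumes "(T \<longlongrightarrow> T0) F" "(a \<longlongrightarrow> a0) F" "\<forall>\<^sub>F x in F. psd (T x) \<and> 0 \<le> a x"
    and "psd T0" "0 \<le> a0"
  shows "((\<lambda>x. resolvent (T x) (a x)) \<longlongrightarrow> resolvent T0 a0) F"
proof -
  define R where "R x = resolvent (T x) (a x)" for x
  define D where "D x = a0 *\<^sub>R T0 - a x *\<^sub>R T x" for x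
  have D: "((\<lambda>x. D x $ k $ l) \<longlongrightarrow> 0) F" for k l
  proof -
    have "((\<lambda>x. D x $ k $ l) \<longlongrightarrow> (a0 *\<^sub>R T0 - a0 *\<^sub>R T0) $ k $ l) F"
      unfolding D_def by (intro tendsto_intros assms)
    then show ?thesis by simp
  qed
  \<comment> \<open>The entries of all resolvents are bounded by 1, so R x ** D x ** R0 tends to 0.\<close>
  have bounded: "Bfun (\<lambda>x. R x $ i $ k) F" for i k
    using assms(3) by (intro BfunI[where K=1]) (auto elim: eventually_mono simp: R_def norm_resolvent_entry_le)
  have "((\<lambda>x. R x ** D x ** resolvent T0 a0) \<longlongrightarrow> 0) F"
  proof (intro vec_tendstoI)
    fix i j
    have "((\<lambda>x. R x $ i $ k * D x $ k $ l) \<longlongrightarrow> 0) F" for k l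
      using bounded_bilinear.Bfun_prod_Zfun[OF bounded_bilinear_mult bounded D[of k l, unfolded tendsto_Zfun_iff]]
      by (simp add: tendsto_Zfun_iff)
    then show "((\<lambda>x. (R x ** D x ** resolvent T0 a0) $ i $ j) \<longlongrightarrow> 0 $ i $ j) F"
      unfolding matrix_matrix_mult_def by (auto intro!: tendsto_null_sum tendsto_mult_left_zero)
  qed
  then have "((\<lambda>x. resolvent T0 a0 + R x ** D x ** resolvent T0 a0) \<longlongrightarrow> resolvent T0 a0 + 0) F"
    by (intro tendsto_add tendsto_const)
  moreover have "\<forall>\<^sub>F x in F. resolvent T0 a0 + R x ** D x ** resolvent T0 a0 = R x"
    using assms(3)
  proof eventually_elim
    case (elim x)
    then show ?case
      using resolvent_diff[of "T x" T0 "a x" a0] assms(4,5)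
      by (metis R_def D_def add.commute diff_add_cancel)
  qed
  ultimately show ?thesis
    unfolding R_def by (simp add: Lim_transform_eventually)
qed

lemma continuous_on_resolvent: "psd T \<Longrightarrow> continuous_on {0..} (resolvent T)"
  unfolding continuous_on_def
  by (auto intro!: tendsto_resolvent simp: eventually_at_filter)

lemma cinner_resolvent_mult_resolvent_nonneg:
  assumes "psd T" "0 \<le> a" "0 \<le> b"
  shows "cinner c ((resolvent T b ** resolvent T a) *v c) \<in> \<real>\<^sub>\<ge>\<^sub>0"
proof -
  let ?A = "\<lambda>s. mat 1 + s *\<^sub>R T"
  define y where "y = (resolvent T b ** resolvent T a) *v c"
  have "?A a ** (?A b ** (resolvent T b ** resolvent T a)) = mat 1"
    using resolvent_inverse(2)[OF assms(1,2)] resolvent_inverse(2)[OF assms(1,3)]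
    by (simp add: matrix_mul_assoc)
  then have c: "c = ?A a *v (?A b *v y)"
    by (simp only: y_def matrix_vector_mul_assoc matrix_vector_mul_lid)
  have herm: "cadj (?A a) = ?A a"
    using assms(1) by (simp add: psd_iff hermitian_def cadj_add cadj_scaleR cadj_mat)
  have Ty: "cinner y (T *v y) \<in> \<real>\<^sub>\<ge>\<^sub>0"
    using assms(1) by (simp add: psd_iff)
  then have yT: "cinner (T *v y) y = cinner y (T *v y)"
    by (metis cinner_commute cnj_nonneg_Reals)
  have "cinner y c = cinner (?A a *v y) (?A b *v y)"
    by (simp add: c cinner_adjoint herm)
  also have "\<dots> = cinner y y + b *\<^sub>R cinner y (T *v y) + a *\<^sub>R cinner y (T *v y)
                   + (a * b) *\<^sub>R cinner (T *v y) (T *v y)"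
    by (simp add: matrix_vector_mult_add_rdistrib matrix_vector_mult_scaleR cinner_add_left
        cinner_add_right cinner_scaleR_left cinner_scaleR_right yT scaleR_add_right)
  finally have "cinner y c \<in> \<real>\<^sub>\<ge>\<^sub>0"
    using Ty assms(2,3) by (simp add: cinner_self scaleR_conv_of_real)
  then show ?thesis
    by (metis y_def cinner_commute cnj_nonneg_Reals)
qed

lemma trace_resolvent_gram_resolvent_nonneg:
  fixes B :: "complex^'k^'n"
  assumes "0 \<le> a" "0 \<le> b"
  defines "T \<equiv> B ** cadj B"
  shows "trace (resolvent T a ** T ** resolvent T b) \<in> \<real>\<^sub>\<ge>\<^sub>0"
proof -
  have "trace (resolvent T a ** T ** resolvent T b)
      = trace (cadj B ** (resolvent T b ** resolvent T a) ** B)"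
    using trace_mul_sym[of "resolvent T a ** B" "cadj B ** resolvent T b"]
    by (simp add: T_def matrix_mul_assoc)
  also have "\<dots> = (\<Sum>k\<in>UNIV. cinner (column k B) ((resolvent T b ** resolvent T a) *v column k B))"
    by (simp add: trace_def diag_cadj_mult_mult)
  finally show ?thesis
    using cinner_resolvent_mult_resolvent_nonneg[OF psd_gram[of B] assms(1,2)] T_def
    by (auto intro: nonneg_Reals_sum)
qed

lemma trace_resolvent_antimono:
  fixes B :: "complex^'k^'n"
  assumes "0 \<le> a" "a \<le> b"
  shows "Re (trace (resolvent (B ** cadj B) b)) \<le> Re (trace (resolvent (B ** cadj B) a))"
proof -
  let ?T = "B ** cadj B"
  have diff: "resolvent ?T a - resolvent ?T b = (b - a) *\<^sub>R (resolvent ?T a ** ?T ** resolvent ?T b)"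
    using resolvent_diff[OF psd_gram[of B] psd_gram[of B], of a b] assms
    by (simp add: matrix_scaleR_left matrix_scaleR_right flip: scaleR_diff_left)
  have "Re (trace (resolvent ?T a)) - Re (trace (resolvent ?T b))
      = (b - a) * Re (trace (resolvent ?T a ** ?T ** resolvent ?T b))"
    using arg_cong[OF diff, of "\<lambda>M. Re (trace M)"] by (simp add: trace_sub trace_scaleR)
  moreover have "0 \<le> Re (trace (resolvent ?T a ** ?T ** resolvent ?T b))"
    using trace_resolvent_gram_resolvent_nonneg[of a b B] assms by (simp add: complex_nonneg_Reals_iff)
  ultimately show ?thesis
    using assms by (metis diff_ge_0_iff_ge mult_nonneg_nonneg)
qed

section \<open>The fixed-point equation\<close>

text \<open>
  For a = \<rho> / (1 + \<rho> d) one has d = 1/a - 1/\<rho>, and a tr(T Q(a)) = n - tr Q(a); so this is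
  a N times the defect d - tr(T Q(a)) / N of the fixed-point equation.
\<close>
definition alpha_residual :: "nat \<Rightarrow> real \<Rightarrow> complex^'n^'n \<Rightarrow> real \<Rightarrow> real" where
  "alpha_residual N \<rho> T a = real N * (1 - a / \<rho>) - real CARD('n) + Re (trace (resolvent T a))"

lemma strict_antimono_alpha_residual:
  fixes B :: "complex^'k^'n"
  assumes "0 < N" "0 < \<rho>"
  shows "strict_antimono_on {0..} (alpha_residual N \<rho> (B ** cadj B))"
proof (rule monotone_onI)
  fix a b :: real assume "a \<in> {0..}" "b \<in> {0..}" "a < b"
  then have "Re (trace (resolvent (B ** cadj B) b)) \<le> Re (trace (resolvent (B ** cadj B) a))"
    by (simp add: trace_resolvent_antimono)
  moreover have "real N * (a / \<rho>) < real N * (b / \<rho>)"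
    using assms \<open>a < b\<close> by (simp add: divide_strict_right_mono)
  ultimately show "alpha_residual N \<rho> (B ** cadj B) b < alpha_residual N \<rho> (B ** cadj B) a"
    by (simp add: alpha_residual_def algebra_simps)
qed

lemma alpha_residual_root_exists:
  fixes B :: "complex^'k^'n"
  assumes "0 < N" "0 < \<rho>"
  shows "\<exists>a. 0 < a \<and> a \<le> \<rho> \<and> alpha_residual N \<rho> (B ** cadj B) a = 0"
proof -
  let ?f = "alpha_residual N \<rho> (B ** cadj B)"
  have "?f 0 = real N"
    by (simp add: alpha_residual_def resolvent_zero[OF psd_gram] trace_I)
  moreover have "Re (trace (resolvent (B ** cadj B) \<rho>)) \<le> real CARD('n)"
    using trace_resolvent_antimono[of 0 \<rho> B] assms
    by (simp add: resolvent_zero[OF psd_gram] trace_I)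
  then have "?f \<rho> \<le> 0"
    using assms by (simp add: alpha_residual_def)
  moreover have "continuous_on {0..\<rho>} ?f"
    unfolding alpha_residual_def
    by (intro continuous_intros continuous_on_subset[OF continuous_on_resolvent[OF psd_gram]])
      (use assms in auto)
  ultimately obtain a where "0 \<le> a" "a \<le> \<rho>" "?f a = 0"
    using IVT2'[of ?f \<rho> 0 0] assms by auto
  moreover have "a \<noteq> 0"
    using \<open>?f 0 = real N\<close> \<open>?f a = 0\<close> assms by auto
  ultimately show ?thesis
    by (auto intro!: exI[of _ a])
qed

lemma fixed_point_iff_alpha_residual:
  fixes T :: "complex^'n^'n"
  assumes "psd T" "0 < N" "0 < \<rho>" "0 \<le> d"
  defines "c \<equiv> \<rho> / (1 + \<rho> * d)"
  shows "complex_of_real d = trace (T ** resolvent T c) / of_nat N \<longleftrightarrow> alpha_residual N \<rho> T c = 0"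
proof -
  have "0 < 1 + \<rho> * d"
    using assms by (simp add: add_pos_nonneg)
  moreover have "c / \<rho> = 1 / (1 + \<rho> * d)"
    using assms(3) by (simp add: c_def)
  ultimately have "0 < c" "d * c = 1 - c / \<rho>"
    using assms(3) by (simp_all add: c_def field_simps)
  have "trace (T ** resolvent T c) / of_nat N
      = of_real ((real CARD('n) - Re (trace (resolvent T c))) / c / real N)"
    using trace_mult_resolvent[OF assms(1) \<open>0 < c\<close>] by simp
  then have "complex_of_real d = trace (T ** resolvent T c) / of_nat N
      \<longleftrightarrow> d = (real CARD('n) - Re (trace (resolvent T c))) / c / real N"
    by (simp only: of_real_eq_iff)
  also have "\<dots> \<longleftrightarrow> d * c * real N = real CARD('n) - Re (trace (resolvent T c))"
    using \<open>0 < c\<close> assms(2) by (auto simp: field_simps)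
  also have "\<dots> \<longleftrightarrow> real N * (1 - c / \<rho>) = real CARD('n) - Re (trace (resolvent T c))"
    using \<open>d * c = 1 - c / \<rho>\<close> by (simp add: mult.commute)
  also have "\<dots> \<longleftrightarrow> alpha_residual N \<rho> T c = 0"
    by (auto simp: alpha_residual_def)
  finally show ?thesis .
qed

lemma delta_eq_root:
  assumes "hermitian S" "0 < N" "0 < \<rho>" "0 < a" "a \<le> \<rho>"
    and root: "alpha_residual N \<rho> (Tmat S G) a = 0"
  shows "delta N S \<rho> G = 1 / a - 1 / \<rho>"
  unfolding delta_def matrix_inv_shift_eq_resolvent
proof (rule the_equality)
  have T: "Tmat S G = (S ** G) ** cadj (S ** G)"
    using assms(1) by (rule Tmat_gram)
  have inj: "inj_on (alpha_residual N \<rho> (Tmat S G)) {0..}"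
    using strict_antimono_alpha_residual[OF assms(2,3), of "S ** G"] T
    by (simp add: strict_antimono_iff_antimono)
  have d: "0 \<le> 1 / a - 1 / \<rho>"
    using assms(3-5) by (simp add: divide_left_mono)
  have c: "\<rho> / (1 + \<rho> * (1 / a - 1 / \<rho>)) = a"
    using assms(3,4) by (simp add: field_simps)
  have "complex_of_real (1 / a - 1 / \<rho>) =
      trace (Tmat S G ** resolvent (Tmat S G) (\<rho> / (1 + \<rho> * (1 / a - 1 / \<rho>)))) / of_nat N"
    using fixed_point_iff_alpha_residual[OF psd_Tmat[OF assms(1)] assms(2,3) d] root
    unfolding c by blast
  with d show "0 \<le> 1 / a - 1 / \<rho> \<and> complex_of_real (1 / a - 1 / \<rho>) =
      trace (Tmat S G ** resolvent (Tmat S G) (\<rho> / (1 + \<rho> * (1 / a - 1 / \<rho>)))) / of_nat N"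
    by blast
  fix d
  assume "0 \<le> d \<and> complex_of_real d =
      trace (Tmat S G ** resolvent (Tmat S G) (\<rho> / (1 + \<rho> * d))) / of_nat N"
  then have "0 \<le> d" "alpha_residual N \<rho> (Tmat S G) (\<rho> / (1 + \<rho> * d)) = 0"
    using fixed_point_iff_alpha_residual[OF psd_Tmat[OF assms(1)] assms(2,3), of d] by auto
  moreover have "0 \<le> \<rho> / (1 + \<rho> * d)"
    using \<open>0 \<le> d\<close> assms(3) by simp
  ultimately have "\<rho> / (1 + \<rho> * d) = a"
    using inj_onD[OF inj, of "\<rho> / (1 + \<rho> * d)" a] root assms(4) by simp
  moreover have "0 < 1 + \<rho> * d"
    using \<open>0 \<le> d\<close> assms(3) by (simp add: add_pos_nonneg)
  ultimately have "\<rho> = a * (1 + \<rho> * d)"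
    by (simp add: divide_eq_eq)
  then show "d = 1 / a - 1 / \<rho>"
    using assms(3,4) by (simp add: field_simps)
qed

definition alpha :: "nat \<Rightarrow> complex^'n^'n \<Rightarrow> real \<Rightarrow> complex^'k^'n \<Rightarrow> real" where
  "alpha N S \<rho> G = \<rho> / (1 + \<rho> * delta N S \<rho> G)"

lemma alpha_root:
  assumes "hermitian S" "0 < N" "0 < \<rho>"
  shows "0 < alpha N S \<rho> G" "alpha N S \<rho> G \<le> \<rho>"
    and "alpha_residual N \<rho> (Tmat S G) (alpha N S \<rho> G) = 0"
    and "delta N S \<rho> G = 1 / alpha N S \<rho> G - 1 / \<rho>"
proof -
  obtain a where a: "0 < a" "a \<le> \<rho>" "alpha_residual N \<rho> (Tmat S G) a = 0"
    using alpha_residual_root_exists[OF assms(2,3), of "S ** G"] Tmat_gram[OF assms(1), of G]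
    by auto
  then have "delta N S \<rho> G = 1 / a - 1 / \<rho>"
    using delta_eq_root[OF assms] by blast
  then have "1 + \<rho> * delta N S \<rho> G = \<rho> / a"
    using a(1) assms(3) by (simp add: field_simps)
  then have "alpha N S \<rho> G = a"
    using a(1) assms(3) by (simp add: alpha_def)
  then show "0 < alpha N S \<rho> G" "alpha N S \<rho> G \<le> \<rho>"
    and "alpha_residual N \<rho> (Tmat S G) (alpha N S \<rho> G) = 0"
    and "delta N S \<rho> G = 1 / alpha N S \<rho> G - 1 / \<rho>"
    using a \<open>delta N S \<rho> G = 1 / a - 1 / \<rho>\<close> by simp_all
qed

lemma delta_fixed_point:
  assumes "hermitian S" "0 < N" "0 < \<rho>"
  shows "complex_of_real (delta N S \<rho> G) * of_nat N
           = trace (Tmat S G ** resolvent (Tmat S G) (alpha N S \<rho> G))"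
proof -
  have "1 / \<rho> \<le> 1 / alpha N S \<rho> G"
    using alpha_root(1,2)[OF assms, of G] by (simp add: divide_left_mono)
  then have "0 \<le> delta N S \<rho> G"
    using alpha_root(4)[OF assms, of G] by simp
  moreover have "alpha_residual N \<rho> (Tmat S G) (\<rho> / (1 + \<rho> * delta N S \<rho> G)) = 0"
    using alpha_root(3)[OF assms, of G] by (simp add: alpha_def)
  ultimately have "complex_of_real (delta N S \<rho> G) =
      trace (Tmat S G ** resolvent (Tmat S G) (alpha N S \<rho> G)) / of_nat N"
    using fixed_point_iff_alpha_residual[OF psd_Tmat[OF assms(1)] assms(2,3)]
    unfolding alpha_def by blast
  then show ?thesis
    using assms(2) by (simp add: eq_divide_eq)
qed

lemma tendsto_root_strict_antimono:
  fixes h :: "'a \<Rightarrow> real \<Rightarrow> real" and g :: "real \<Rightarrow> real"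
  assumes roots: "\<forall>\<^sub>F x in F. strict_antimono_on {0..} (h x) \<and> 0 \<le> r x \<and> h x (r x) = 0"
    and g: "strict_antimono_on {0..} g" "0 < r0" "g r0 = 0"
    and lim: "\<And>y. 0 \<le> y \<Longrightarrow> ((\<lambda>x. h x y) \<longlongrightarrow> g y) F"
  shows "(r \<longlongrightarrow> r0) F"
proof (rule tendstoI)
  fix e :: real
  assume "0 < e"
  define e' where "e' = min e (r0 / 2)"
  have e': "0 < e'" "e' \<le> e" "e' < r0"
    using \<open>0 < e\<close> g(2) by (auto simp: e'_def)
  have "g (r0 + e') < 0" "0 < g (r0 - e')"
    using monotone_onD[OF g(1), of r0 "r0 + e'"] monotone_onD[OF g(1), of "r0 - e'" r0] e' g(3)
    by auto
  then have "\<forall>\<^sub>F x in F. h x (r0 + e') < 0" "\<forall>\<^sub>F x in F. 0 < h x (r0 - e')"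
    using order_tendstoD(2)[OF lim] order_tendstoD(1)[OF lim] e' by auto
  with roots show "\<forall>\<^sub>F x in F. dist (r x) r0 < e"
  proof eventually_elim
    case (elim x)
    then have mono: "antimono_on {0..} (h x)"
      by (simp add: strict_antimono_iff_antimono)
    have "r0 - e' < r x"
      using monotone_onD[OF mono, of "r x" "r0 - e'"] elim e' by force
    moreover have "r x < r0 + e'"
      using monotone_onD[OF mono, of "r0 + e'" "r x"] elim e' by force
    ultimately show ?case
      using e' by (simp add: dist_real_def abs_less_iff)
  qed
qed

lemma isCont_alpha:
  assumes "hermitian S" "0 < N" "0 < \<rho>"
  shows "isCont (alpha N S \<rho>) G"
  unfolding isCont_def
proof (rule tendsto_root_strict_antimono[where h = "\<lambda>H. alpha_residual N \<rho> (Tmat S H)"])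
  have mono: "strict_antimono_on {0..} (alpha_residual N \<rho> (Tmat S H))" for H
    using strict_antimono_alpha_residual[OF assms(2,3)] by (simp add: Tmat_gram[OF assms(1)])
  then show "\<forall>\<^sub>F H in at G. strict_antimono_on {0..} (alpha_residual N \<rho> (Tmat S H))
      \<and> 0 \<le> alpha N S \<rho> H \<and> alpha_residual N \<rho> (Tmat S H) (alpha N S \<rho> H) = 0"
    using alpha_root[OF assms] by (auto intro!: always_eventually less_imp_le)
  show "strict_antimono_on {0..} (alpha_residual N \<rho> (Tmat S G))"
    by (rule mono)
  show "0 < alpha N S \<rho> G" "alpha_residual N \<rho> (Tmat S G) (alpha N S \<rho> G) = 0"
    using alpha_root[OF assms] by auto
  fix y :: real
  assume "0 \<le> y"
  then show "((\<lambda>H. alpha_residual N \<rho> (Tmat S H) y) \<longlongrightarrow> alpha_residual N \<rho> (Tmat S G) y) (at G)"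
    unfolding alpha_residual_def
    using psd_Tmat[OF assms(1)] by (intro tendsto_intros tendsto_resolvent) auto
qed

lemma isCont_resolvent_alpha:
  assumes "hermitian S" "0 < N" "0 < \<rho>"
  shows "isCont (\<lambda>H. resolvent (Tmat S H) (alpha N S \<rho> H)) G"
  unfolding isCont_def
  using alpha_root(1)[OF assms] psd_Tmat[OF assms(1)] isCont_alpha[OF assms, of G]
  by (intro tendsto_resolvent tendsto_intros) (auto simp: isCont_def intro!: always_eventually less_imp_le)

section \<open>Differentiating the fixed point\<close>

lemma Tmat_add_scaleR:
  "Tmat S (F + t *\<^sub>R E) - Tmat S F
     = t *\<^sub>R (S ** F ** cadj E ** S + S ** E ** cadj F ** S + t *\<^sub>R Tmat S E)"
  by (simp add: Tmat_def cadj_add cadj_scaleR matrix_add_ldistrib matrix_add_rdistrib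
      matrix_scaleR_left matrix_scaleR_right algebra_simps)

lemma delta_difference_identity:
  assumes "hermitian S" "0 < N" "0 < \<rho>"
  defines "a \<equiv> alpha N S \<rho>" and "T \<equiv> Tmat S" and "Q \<equiv> \<lambda>G. resolvent (Tmat S G) (alpha N S \<rho> G)"
  shows "of_real (delta N S \<rho> H - delta N S \<rho> G)
           * (of_nat N - of_real (a G * a H) * trace (T G ** Q H ** T G ** Q G))
         = trace ((T H - T G) ** Q H) - of_real (a H) * trace (T G ** Q H ** (T H - T G) ** Q G)"
proof -
  define X1 where "X1 = trace (T G ** Q H ** T G ** Q G)"
  define X2 where "X2 = trace (T G ** Q H ** (T H - T G) ** Q G)"
  have "Q H - Q G = Q H ** (a G *\<^sub>R T G - a H *\<^sub>R T H) ** Q G"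
    unfolding Q_def a_def T_def
    using alpha_root(1)[OF assms(1-3)] by (intro resolvent_diff psd_Tmat assms(1) less_imp_le)
  also have "a G *\<^sub>R T G - a H *\<^sub>R T H = (a G - a H) *\<^sub>R T G - a H *\<^sub>R (T H - T G)"
    by (simp add: algebra_simps)
  finally have "T G ** (Q H - Q G)
      = (a G - a H) *\<^sub>R (T G ** Q H ** T G ** Q G) - a H *\<^sub>R (T G ** Q H ** (T H - T G) ** Q G)"
    by (simp add: matrix_diff_ldistrib matrix_diff_rdistrib matrix_scaleR_left matrix_scaleR_right
        matrix_mul_assoc)
  then have "trace (T G ** (Q H - Q G))
      = trace ((a G - a H) *\<^sub>R (T G ** Q H ** T G ** Q G) - a H *\<^sub>R (T G ** Q H ** (T H - T G) ** Q G))"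
    by (rule arg_cong)
  then have "trace (T G ** Q H) - trace (T G ** Q G) = of_real (a G - a H) * X1 - of_real (a H) * X2"
    unfolding X1_def X2_def by (simp only: matrix_diff_ldistrib trace_sub trace_scaleR)
  moreover have "a G - a H = a G * a H * (1 / a H - 1 / a G)"
    using alpha_root(1)[OF assms(1-3), of G] alpha_root(1)[OF assms(1-3), of H]
    unfolding a_def by (simp add: field_simps)
  then have "a G - a H = a G * a H * (delta N S \<rho> H - delta N S \<rho> G)"
    using alpha_root(4)[OF assms(1-3), of G] alpha_root(4)[OF assms(1-3), of H]
    unfolding a_def by simp
  moreover have "of_real (delta N S \<rho> K) * of_nat N = trace (T K ** Q K)" for K
    unfolding T_def Q_def by (rule delta_fixed_point[OF assms(1-3)])
  ultimately show ?thesis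
    unfolding X1_def[symmetric] X2_def[symmetric]
    by (simp add: matrix_diff_rdistrib trace_sub algebra_simps)
qed

lemma fixed_point_denominator_pos:
  fixes S :: "complex^'n^'n" and G :: "complex^'k^'n"
  assumes "hermitian S" "0 < N" "0 < \<rho>"
  defines "a \<equiv> alpha N S \<rho> G" and "T \<equiv> Tmat S G" and "Q \<equiv> resolvent (Tmat S G) (alpha N S \<rho> G)"
  shows "\<exists>\<beta>>0. of_nat N - of_real (a * a) * trace (T ** Q ** T ** Q) = of_real \<beta>"
proof -
  have a: "0 < a" "alpha_residual N \<rho> T a = 0"
    using alpha_root[OF assms(1-3), of G] by (simp_all add: a_def T_def)
  have psd: "psd T"
    unfolding T_def using assms(1) by (rule psd_Tmat)
  have TQ: "a *\<^sub>R (T ** Q) = mat 1 - Q"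
    unfolding Q_def a_def T_def using psd a(1) by (intro scaleR_mult_resolvent) (simp_all add: T_def a_def)
  have "(a * a) *\<^sub>R (T ** Q ** T ** Q) = (a *\<^sub>R (T ** Q)) ** (a *\<^sub>R (T ** Q))"
    by (simp add: matrix_scaleR_left matrix_scaleR_right matrix_mul_assoc)
  also have "\<dots> = mat 1 - Q - Q + Q ** Q"
    by (simp add: TQ matrix_diff_ldistrib matrix_diff_rdistrib algebra_simps)
  finally have "trace ((a * a) *\<^sub>R (T ** Q ** T ** Q)) = trace (mat 1 - Q - Q + Q ** Q)"
    by (rule arg_cong)
  then have sq: "of_real (a * a) * trace (T ** Q ** T ** Q)
      = of_nat CARD('n) - 2 * trace Q + trace (Q ** Q)"
    by (simp only: trace_scaleR trace_add trace_sub trace_I) (simp add: algebra_simps)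
  have "Q ** (a *\<^sub>R (T ** Q)) = Q - Q ** Q"
    by (simp add: TQ matrix_diff_ldistrib)
  then have "trace (a *\<^sub>R (Q ** T ** Q)) = trace (Q - Q ** Q)"
    by (simp add: matrix_scaleR_right matrix_mul_assoc)
  then have "of_real a * trace (Q ** T ** Q) = trace Q - trace (Q ** Q)"
    by (simp only: trace_scaleR trace_sub)
  then have QQ: "trace (Q ** Q) = trace Q - of_real a * trace (Q ** T ** Q)"
    by (simp add: algebra_simps)
  obtain r where r: "0 \<le> r" "trace (Q ** T ** Q) = of_real r"
    using trace_resolvent_gram_resolvent_nonneg[of a a "S ** G"] a(1) Tmat_gram[OF assms(1), of G]
    by (auto simp: Q_def T_def a_def elim!: nonneg_Reals_cases)
  define q where "q = Re (trace Q)"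
  have "trace Q = of_real q"
    using hermitian_trace_real[OF hermitian_resolvent[OF psd less_imp_le[OF a(1)]]]
    by (simp add: q_def Q_def T_def a_def)
  moreover have "real N - real CARD('n) + q = real N * a / \<rho>"
    using a(2) by (simp add: alpha_residual_def q_def Q_def T_def a_def algebra_simps)
  ultimately have "of_nat N - of_real (a * a) * trace (T ** Q ** T ** Q)
      = of_real (real N - (real CARD('n) - 2 * q + (q - a * r)))"
    unfolding sq QQ r(2) by simp
  also have "\<dots> = of_real (real N * a / \<rho> + a * r)"
    using \<open>real N - real CARD('n) + q = real N * a / \<rho>\<close> by (intro arg_cong[where f = of_real]) linarith
  finally have "of_nat N - of_real (a * a) * trace (T ** Q ** T ** Q) = of_real (real N * a / \<rho> + a * r)" .
  moreover have "0 < real N * a / \<rho> + a * r"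
    using assms(2,3) a(1) r(1) by (simp add: add_pos_nonneg)
  ultimately show ?thesis by blast
qed

lemma trace_variation_Tmat:
  assumes "hermitian S" "hermitian Q"
  shows "trace (Q ** Q ** (S ** F ** cadj E ** S + S ** E ** cadj F ** S))
           = of_real (2 * Re (trace (cadj E ** (S ** Q ** Q ** S ** F))))"
proof -
  define W where "W = S ** Q ** Q ** S ** F"
  have cW: "cadj W = cadj F ** S ** Q ** Q ** S"
    using assms by (simp add: W_def hermitian_def cadj_mult matrix_mul_assoc)
  have "trace (Q ** Q ** (S ** F ** cadj E ** S)) = trace (S ** (Q ** Q ** S ** F ** cadj E))"
    using trace_mul_sym[of "Q ** Q ** S ** F ** cadj E" S] by (simp add: matrix_mul_assoc)
  also have "\<dots> = trace (cadj E ** W)"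
    using trace_mul_sym[of "W" "cadj E"] by (simp add: W_def matrix_mul_assoc)
  finally have first: "trace (Q ** Q ** (S ** F ** cadj E ** S)) = trace (cadj E ** W)" .
  have "trace (Q ** Q ** (S ** E ** cadj F ** S)) = trace ((E ** cadj F ** S) ** (Q ** Q ** S))"
    using trace_mul_sym[of "Q ** Q ** S" "E ** cadj F ** S"] by (simp add: matrix_mul_assoc)
  also have "\<dots> = trace (cadj W ** E)"
    using trace_mul_sym[of E "cadj F ** S ** Q ** Q ** S"] by (simp add: cW matrix_mul_assoc)
  also have "\<dots> = cnj (trace (cadj E ** W))"
    by (simp add: trace_cadj[symmetric] cadj_mult)
  finally show ?thesis
    using first by (simp add: W_def matrix_add_ldistrib trace_add complex_add_cnj)
qed

lemma fixed_point_numerator: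
  fixes S :: "complex^'n^'n" and G E :: "complex^'k^'n"
  assumes "hermitian S" "0 < N" "0 < \<rho>"
  defines "a \<equiv> alpha N S \<rho> G" and "T \<equiv> Tmat S G" and "Q \<equiv> resolvent (Tmat S G) (alpha N S \<rho> G)"
    and "X \<equiv> S ** G ** cadj E ** S + S ** E ** cadj G ** S"
  shows "trace (X ** Q) - of_real a * trace (T ** Q ** X ** Q)
           = of_real (2 * Re (trace (cadj E ** (S ** Q ** Q ** S ** G))))"
proof -
  have "psd T" "0 \<le> a"
    using psd_Tmat[OF assms(1)] alpha_root(1)[OF assms(1-3), of G]
    by (simp_all add: T_def a_def less_imp_le)
  then show ?thesis
    unfolding X_def Q_def T_def a_def
    by (simp add: trace_resolvent_sq trace_variation_Tmat assms(1) hermitian_resolvent)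
qed

lemma has_real_derivative_of_difference_identity:
  fixes d :: "real \<Rightarrow> real" and B R :: "real \<Rightarrow> complex"
  assumes quotient: "\<And>t. of_real (d t - d 0) * B t = of_real t * R t"
    and B: "(B \<longlongrightarrow> of_real \<beta>) (at 0)" "\<beta> \<noteq> 0"
    and R: "(R \<longlongrightarrow> R0) (at 0)"
  shows "(d has_real_derivative Re R0 / \<beta>) (at 0)"
proof -
  have "complex_of_real \<beta> \<noteq> 0"
    using B(2) by simp
  have "\<forall>\<^sub>F t in at 0. R t / B t = of_real ((d t - d 0) / (t - 0))"
    using tendsto_imp_eventually_ne[OF B(1) \<open>complex_of_real \<beta> \<noteq> 0\<close>] eventually_neq_at_within[of 0 0 UNIV]
  proof eventually_elim
    case (elim t)
    then show ?case
      using quotient[of t] by (simp add: field_simps)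
  qed
  then have "((\<lambda>t. of_real ((d t - d 0) / (t - 0))) \<longlongrightarrow> R0 / of_real \<beta>) (at 0)"
    by (rule Lim_transform_eventually[OF tendsto_divide[OF R B(1) \<open>complex_of_real \<beta> \<noteq> 0\<close>]])
  then have "((\<lambda>t. (d t - d 0) / (t - 0)) \<longlongrightarrow> Re (R0 / of_real \<beta>)) (at 0)"
    using tendsto_Re by fastforce
  then show ?thesis
    by (simp add: has_field_derivative_iff)
qed

lemma trace_mult_divide: "trace (A ** (\<chi> i j. W $ i $ j / c)) = trace (A ** W) / (c :: complex)"
  by (simp add: trace_def matrix_matrix_mult_def sum_divide_distrib)

definition delta_gradient :: "nat \<Rightarrow> complex^'n^'n \<Rightarrow> real \<Rightarrow> complex^'k^'n \<Rightarrow> complex^'k^'n" where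
  "delta_gradient N S \<rho> F =
     (let a = alpha N S \<rho> F; T = Tmat S F; Q = resolvent T a
      in \<chi> i j. (S ** Q ** Q ** S ** F) $ i $ j
                 / (of_nat N - (of_real a)\<^sup>2 * trace ((T ** Q) ** (T ** Q))))"

lemma delta_has_directional_derivative:
  fixes S :: "complex^'n^'n" and F E :: "complex^'k^'n"
  assumes "hermitian S" "0 < N" "0 < \<rho>"
  shows "((\<lambda>t. delta N S \<rho> (F + t *\<^sub>R E)) has_real_derivative
           2 * Re (trace (cadj E ** delta_gradient N S \<rho> F))) (at 0)"
proof -
  define a where "a t = alpha N S \<rho> (F + t *\<^sub>R E)" for t
  define T where "T t = Tmat S (F + t *\<^sub>R E)" for t
  define Q where "Q t = resolvent (T t) (a t)" for t
  define X where "X t = S ** F ** cadj E ** S + S ** E ** cadj F ** S + t *\<^sub>R Tmat S E" for t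
  define B where "B t = of_nat N - of_real (a 0 * a t) * trace (T 0 ** Q t ** T 0 ** Q 0)" for t
  define R where "R t = trace (X t ** Q t) - of_real (a t) * trace (T 0 ** Q t ** X t ** Q 0)" for t
  have quotient: "of_real (delta N S \<rho> (F + t *\<^sub>R E) - delta N S \<rho> (F + 0 *\<^sub>R E)) * B t
      = of_real t * R t" for t
  proof -
    have "of_real (delta N S \<rho> (F + t *\<^sub>R E) - delta N S \<rho> (F + 0 *\<^sub>R E)) * B t
        = trace ((T t - T 0) ** Q t) - of_real (a t) * trace (T 0 ** Q t ** (T t - T 0) ** Q 0)"
      unfolding B_def a_def T_def Q_def by (rule delta_difference_identity[OF assms])
    also have "T t - T 0 = t *\<^sub>R X t"
      using Tmat_add_scaleR[of S F t E] by (simp add: T_def X_def)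
    finally show ?thesis
      by (simp only: matrix_scaleR_left matrix_scaleR_right trace_scaleR) (simp add: R_def algebra_simps)
  qed
  have "((\<lambda>t. F + t *\<^sub>R E) \<longlongrightarrow> F + 0 *\<^sub>R E) (at 0)"
    by (intro tendsto_intros)
  then have La: "(a \<longlongrightarrow> a 0) (at 0)" and LQ: "(Q \<longlongrightarrow> Q 0) (at 0)"
    unfolding a_def Q_def T_def
    by (rule isCont_tendsto_compose[OF isCont_alpha[OF assms]],
        rule isCont_tendsto_compose[OF isCont_resolvent_alpha[OF assms]])
  have LX: "(X \<longlongrightarrow> X 0) (at 0)"
    unfolding X_def by (intro tendsto_intros)
  have LB: "(B \<longlongrightarrow> B 0) (at 0)"
    unfolding B_def by (intro tendsto_intros La LQ)
  have LR: "(R \<longlongrightarrow> R 0) (at 0)"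
    unfolding R_def by (intro tendsto_intros La LQ LX)
  obtain \<beta> where \<beta>: "0 < \<beta>" "B 0 = of_real \<beta>"
    using fixed_point_denominator_pos[OF assms, of F] by (auto simp: B_def Q_def T_def a_def)
  define W where "W = S ** Q 0 ** Q 0 ** S ** F"
  have R0: "R 0 = of_real (2 * Re (trace (cadj E ** W)))"
    using fixed_point_numerator[OF assms, of F E] by (simp add: R_def X_def W_def Q_def T_def a_def)
  have "delta_gradient N S \<rho> F = (\<chi> i j. W $ i $ j / B 0)"
    by (simp add: delta_gradient_def Let_def W_def B_def Q_def T_def a_def power2_eq_square matrix_mul_assoc)
  then have "2 * Re (trace (cadj E ** delta_gradient N S \<rho> F)) = Re (R 0) / \<beta>"
    by (simp add: trace_mult_divide \<beta>(2) R0 Re_divide_of_real)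
  then show ?thesis
    using has_real_derivative_of_difference_identity[OF quotient LB[unfolded \<beta>(2)] _ LR] \<beta>(1)
    by simp
qed

lemma munit_scaleR: "munit m n (of_real t * c) = t *\<^sub>R munit m n c"
  by (simp add: vec_eq_iff munit_def scaleR_conv_of_real[where 'a=complex])

lemma trace_cadj_munit_mult: "trace (cadj (munit m n c) ** D) = cnj c * D $ m $ n"
proof -
  have inner: "(\<Sum>i\<in>UNIV. if i = m \<and> j = n then x else 0) = (if j = n then x else 0)"
    for j and x :: complex
    by (cases "j = n") simp_all
  show ?thesis
    by (simp add: trace_def matrix_matrix_mult_def munit_def if_distrib if_distribR cong: if_cong)
      (simp add: inner)
qed

lemma has_wirtinger_conj_derivI:
  assumes "\<And>E. ((\<lambda>t. g (F + t *\<^sub>R E)) has_real_derivative 2 * Re (trace (cadj E ** D))) (at 0)"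
  shows "has_wirtinger_conj_deriv g F m n (D $ m $ n)"
proof -
  have "((\<lambda>t. g (F + munit m n (of_real t))) has_real_derivative 2 * Re (D $ m $ n)) (at 0)"
    using assms[of "munit m n 1"] munit_scaleR[of m n _ 1] by (simp add: trace_cadj_munit_mult)
  moreover have "((\<lambda>t. g (F + munit m n (\<i> * of_real t))) has_real_derivative 2 * Im (D $ m $ n)) (at 0)"
    using assms[of "munit m n \<i>"] munit_scaleR[of m n _ \<i>] by (simp add: trace_cadj_munit_mult mult.commute)
  ultimately show ?thesis
    unfolding has_wirtinger_conj_deriv_def
    by (intro exI[of _ "2 * Re (D $ m $ n)"] exI[of _ "2 * Im (D $ m $ n)"] conjI)
      (auto simp: complex_eq_iff)
qed

theorem proposition3:
  fixes R S :: "complex^'nt^'nt" and F :: "complex^'k^'nt" and NS :: nat and \<rho> :: real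
  assumes "NS > 0"
    and "psd R"
    and "psd S" and "S ** S = R"
    and "\<rho> > 0"
  shows "\<forall>m n. has_wirtinger_conj_deriv (\<lambda>G. delta NS S \<rho> G) F m n
     (let \<alpha> = complex_of_real (\<rho> / (1 + \<rho> * delta NS S \<rho> F));
          T = Tmat S F;
          Q = matrix_inv (mat 1 + mat \<alpha> ** T)
      in (S ** Q ** Q ** S ** F) $ m $ n
         / (of_nat NS - \<alpha>\<^sup>2 * trace ((T ** Q) ** (T ** Q))))"
proof -
  have "hermitian S"
    using \<open>psd S\<close> by (simp add: psd_def)
  then have "has_wirtinger_conj_deriv (delta NS S \<rho>) F m n (delta_gradient NS S \<rho> F $ m $ n)" for m n
    using assms(1,5) by (intro has_wirtinger_conj_derivI delta_has_directional_derivative)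
  then show ?thesis
    unfolding Let_def matrix_inv_shift_eq_resolvent alpha_def[symmetric]
    by (simp add: delta_gradient_def Let_def)
qed

end
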